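(* Let $G$ and $H$ be two nontrivial connected graphs with $hn_{cc}(H)=2$. Then $hn_{cc}(G)\leq hn_{cc}(G\Box H)\leq hn_{cc}(G)+1$. Moreover, $hn_{cc}(G\Box H)=hn_{cc}(G)$ if and only if there is a minimum cycle hull set $S$ of $G$ such that $S$ can be partitioned into two sets $S_1$ and $S_2$ with $\langle S_1\rangle_C\cap\langle S_2\rangle_C\neq\emptyset$.
   Context: All graphs are finite, simple and undirected. For a graph $G$ and $S\subseteq V(G)$, the cycle interval $\langle S\rangle$ consists of the vertices of $S$ together with every vertex $w\in V(G)\setminus S$ such that $G[S\cup\{w\}]$ contains a cycle through $w$; $S$ is cycle convex if $\langle S\rangle=S$; the cycle convex hull $\langle S\rangle_C$ is the smallest cycle convex set containing $S$; a (cycle) hull set is a set $S$ with $\langle S\rangle_C=V(G)$, and $hn_{cc}(G)$ is the minimum cardinality of a hull set; a minimum hull set is a hull set of cardinality $hn_{cc}(G)$. The Cartesian product $G\Box H$ has vertex set $V(G)\times V(H)$, with $(g_1,h_1)\sim(g_2,h_2)$ iff ($g_1\sim g_2$ and $h_1=h_2$) or ($g_1=g_2$ and $h_1\sim h_2$). A graph is nontrivial if it has at least two vertices. *)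

theory Defs
  imports Main
begin

definition is_graph :: "'a set \<Rightarrow> ('a \<Rightarrow> 'a \<Rightarrow> bool) \<Rightarrow> bool" where
  "is_graph V E \<longleftrightarrow> finite V \<and> (\<forall>x y. E x y \<longrightarrow> x \<in> V \<and> y \<in> V)
     \<and> (\<forall>x y. E x y \<longrightarrow> E y x) \<and> (\<forall>x. \<not> E x x)"

definition connected_graph :: "'a set \<Rightarrow> ('a \<Rightarrow> 'a \<Rightarrow> bool) \<Rightarrow> bool" where
  "connected_graph V E \<longleftrightarrow> (\<forall>x\<in>V. \<forall>y\<in>V. E\<^sup>*\<^sup>* x y)"

definition nontrivial_graph :: "'a set \<Rightarrow> bool" where
  "nontrivial_graph V \<longleftrightarrow> card V \<ge> 2"

definition is_cycle :: "('a \<Rightarrow> 'a \<Rightarrow> bool) \<Rightarrow> 'a list \<Rightarrow> bool" where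
  "is_cycle E xs \<longleftrightarrow> length xs \<ge> 3 \<and> distinct xs
     \<and> (\<forall>i < length xs. E (xs ! i) (xs ! ((i + 1) mod length xs)))"

definition cycle_interval :: "'a set \<Rightarrow> ('a \<Rightarrow> 'a \<Rightarrow> bool) \<Rightarrow> 'a set \<Rightarrow> 'a set" where
  "cycle_interval V E S = S \<union> {w \<in> V - S. \<exists>xs. is_cycle E xs \<and> set xs \<subseteq> S \<union> {w} \<and> w \<in> set xs}"

definition cycle_convex :: "'a set \<Rightarrow> ('a \<Rightarrow> 'a \<Rightarrow> bool) \<Rightarrow> 'a set \<Rightarrow> bool" where
  "cycle_convex V E S \<longleftrightarrow> cycle_interval V E S = S"

definition cycle_hull :: "'a set \<Rightarrow> ('a \<Rightarrow> 'a \<Rightarrow> bool) \<Rightarrow> 'a set \<Rightarrow> 'a set" where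
  "cycle_hull V E S = \<Inter> {C. S \<subseteq> C \<and> C \<subseteq> V \<and> cycle_convex V E C}"

definition is_hull_set :: "'a set \<Rightarrow> ('a \<Rightarrow> 'a \<Rightarrow> bool) \<Rightarrow> 'a set \<Rightarrow> bool" where
  "is_hull_set V E S \<longleftrightarrow> S \<subseteq> V \<and> cycle_hull V E S = V"

definition hn_cc :: "'a set \<Rightarrow> ('a \<Rightarrow> 'a \<Rightarrow> bool) \<Rightarrow> nat" where
  "hn_cc V E = (LEAST n. \<exists>S. is_hull_set V E S \<and> card S = n)"

definition min_hull_set :: "'a set \<Rightarrow> ('a \<Rightarrow> 'a \<Rightarrow> bool) \<Rightarrow> 'a set \<Rightarrow> bool" where
  "min_hull_set V E S \<longleftrightarrow> is_hull_set V E S \<and> card S = hn_cc V E"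

definition box_edges :: "('a \<Rightarrow> 'a \<Rightarrow> bool) \<Rightarrow> ('b \<Rightarrow> 'b \<Rightarrow> bool) \<Rightarrow> 'a \<times> 'b \<Rightarrow> 'a \<times> 'b \<Rightarrow> bool" where
  "box_edges EG EH p q \<longleftrightarrow> (EG (fst p) (fst q) \<and> snd p = snd q) \<or> (fst p = fst q \<and> EH (snd p) (snd q))"

end

(*
  A vertex w outside Y lies on a cycle inside Y \<union> {w} iff two distinct neighbours of w are
  joined by a path inside Y.  With this local form of the cycle interval, every layer
  V(G) \<times> {h} and every fibre {g} \<times> V(H) of a cycle-convex set of G \<box> H is cycle convex, and a
  convex set containing three corners of a square contains the fourth; spreading along squares,
  a convex set containing a full layer and a full fibre of connected G, H is everything.

  Lower bound: if T is a hull set of G \<box> H, then \<langle>fst ` T\<rangle> \<times> V(H) is convex and contains T, so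
  fst ` T is a hull set of G.  Upper bound: a hull set {u, v} of H consists of adjacent vertices,
  and S \<times> {u} together with one vertex (g, v), g \<in> S, is a hull set of G \<box> H.

  If the hulls of a partition S1, S2 of a minimum hull set S meet in x, the extra vertex is not
  needed: put the part of S2 lying in the component K of x in G[\<langle>S2\<rangle>] into layer v and the rest
  of S into layer u.  Then x lies in both layers, so its fibre is full, and squares carry
  layer u along K.  Conversely, if the hull numbers agree, a minimum hull set T of G \<box> H projects
  injectively onto a minimum hull set of G; if the hulls of the fibres {g. (g, h) \<in> T} were
  pairwise disjoint, the vertices (g, h) with g in the hull of the h-fibre would form a convex
  set containing T but missing a vertex.
*)

theory Submission
  imports Defs "HOL-Library.Transitive_Closure_Table" "HOL-Library.Disjoint_Sets"
begin

section \<open>Walks in induced subgraphs and cycles\<close>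

definition induced_adj :: "('a \<Rightarrow> 'a \<Rightarrow> bool) \<Rightarrow> 'a set \<Rightarrow> 'a \<Rightarrow> 'a \<Rightarrow> bool" where
  "induced_adj E Y x y \<longleftrightarrow> E x y \<and> x \<in> Y \<and> y \<in> Y"

definition induced_component :: "('a \<Rightarrow> 'a \<Rightarrow> bool) \<Rightarrow> 'a set \<Rightarrow> 'a \<Rightarrow> 'a set" where
  "induced_component E Y x = {y \<in> Y. (induced_adj E Y)\<^sup>*\<^sup>* x y}"

definition linked_neighbours :: "('a \<Rightarrow> 'a \<Rightarrow> bool) \<Rightarrow> 'a set \<Rightarrow> 'a \<Rightarrow> bool" where
  "linked_neighbours E Y w \<longleftrightarrow>
     (\<exists>a b. a \<noteq> b \<and> E w a \<and> E w b \<and> a \<in> Y \<and> b \<in> Y \<and> (induced_adj E Y)\<^sup>*\<^sup>* a b)"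

lemma linked_neighboursI:
  "a \<noteq> b \<Longrightarrow> E w a \<Longrightarrow> E w b \<Longrightarrow> a \<in> Y \<Longrightarrow> b \<in> Y \<Longrightarrow> (induced_adj E Y)\<^sup>*\<^sup>* a b
    \<Longrightarrow> linked_neighbours E Y w"
  unfolding linked_neighbours_def by blast

lemma rtranclp_map:
  assumes "\<And>x y. r x y \<Longrightarrow> s\<^sup>*\<^sup>* (f x) (f y)" and "r\<^sup>*\<^sup>* a b"
  shows "s\<^sup>*\<^sup>* (f a) (f b)"
  using assms(2) by induction (auto dest: assms(1) intro: rtranclp_trans)

lemma successively_imp_rtranclp:
  "successively r xs \<Longrightarrow> xs \<noteq> [] \<Longrightarrow> r\<^sup>*\<^sup>* (hd xs) (last xs)"
  by (induction xs rule: induct_list012) (auto intro: converse_rtranclp_into_rtranclp)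

lemma rtrancl_path_successively:
  "rtrancl_path r x xs y \<Longrightarrow> successively r (x # xs) \<and> last (x # xs) = y"
  by (induction rule: rtrancl_path.induct) auto

lemma rtrancl_path_induced_adj_subset:
  "rtrancl_path (induced_adj E Y) x xs y \<Longrightarrow> set xs \<subseteq> Y"
  by (induction rule: rtrancl_path.induct) (auto simp: induced_adj_def)

lemma induced_walk_mono:
  assumes "(induced_adj E Y)\<^sup>*\<^sup>* a b" and "Y \<subseteq> Z"
  shows "(induced_adj E Z)\<^sup>*\<^sup>* a b"
  using assms(1)
  by (rule rtranclp_mono[THEN predicate2D, rotated]) (use assms(2) in \<open>auto simp: induced_adj_def\<close>)

lemma induced_adj_graph: "is_graph V E \<Longrightarrow> induced_adj E V = E"
  unfolding is_graph_def induced_adj_def by blast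

lemma is_graph_symp: "is_graph V E \<Longrightarrow> symp E"
  unfolding is_graph_def symp_def by blast

lemma induced_walk_stays:
  assumes "(induced_adj E (A \<union> B))\<^sup>*\<^sup>* a b" and "a \<in> A" and "\<forall>x\<in>A. \<forall>y\<in>B. \<not> E x y"
  shows "(induced_adj E A)\<^sup>*\<^sup>* a b \<and> b \<in> A"
  using assms(1)
proof induction
  case (step y z)
  then have "induced_adj E A y z"
    using assms(3) unfolding induced_adj_def by blast
  with step.IH show ?case
    by (auto simp: induced_adj_def intro: rtranclp.rtrancl_into_rtrancl)
qed (use assms(2) in simp)

lemma is_cycle_iff_successively:
  "is_cycle E xs \<longleftrightarrow>
     3 \<le> length xs \<and> distinct xs \<and> successively E xs \<and> E (last xs) (hd xs)"
proof (cases "3 \<le> length xs")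
  case True
  define n where "n = length xs"
  have n: "0 < n" "xs \<noteq> []"
    using True n_def by auto
  have lt: "i < n \<longleftrightarrow> Suc i < n \<or> i = n - 1" for i
    using n(1) by linarith
  have split: "(\<forall>i < n. Q i) \<longleftrightarrow> (\<forall>i. Suc i < n \<longrightarrow> Q i) \<and> Q (n - 1)" for Q
    using lt by blast
  have "(\<forall>i < n. E (xs ! i) (xs ! ((i + 1) mod n))) \<longleftrightarrow>
          (\<forall>i. Suc i < n \<longrightarrow> E (xs ! i) (xs ! Suc i)) \<and> E (xs ! (n - 1)) (xs ! 0)"
    unfolding split using n(1) by (auto cong: conj_cong)
  moreover have "xs ! (n - 1) = last xs" and "xs ! 0 = hd xs"
    using n n_def by (auto simp: last_conv_nth hd_conv_nth)
  ultimately show ?thesis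
    unfolding is_cycle_def successively_conv_nth n_def by simp
qed (simp add: is_cycle_def)

lemma is_cycle_append_commute:
  assumes "is_cycle E (xs @ ys)"
  shows "is_cycle E (ys @ xs)"
proof (cases "xs = [] \<or> ys = []")
  case True
  then show ?thesis
    using assms by auto
next
  case False
  then show ?thesis
    using assms unfolding is_cycle_iff_successively by (auto simp: successively_append_iff)
qed

lemma on_cycle_imp_linked_neighbours:
  assumes "symp E" and "is_cycle E xs" and "set xs \<subseteq> Y \<union> {w}" and "w \<in> set xs"
  shows "linked_neighbours E Y w"
proof -
  obtain ys zs where xs: "xs = ys @ w # zs"
    using split_list assms(4) by metis
  define ps where "ps = zs @ ys"
  have "is_cycle E (w # ps)"
    using is_cycle_append_commute[of E ys "w # zs"] assms(2) xs ps_def by simp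
  then have len: "2 \<le> length ps" and dist: "distinct (w # ps)"
    and succ: "successively E (w # ps)" and close: "E (last ps) w"
    unfolding is_cycle_iff_successively by (auto split: if_splits)
  obtain p qs where ps: "ps = p # qs" and "qs \<noteq> []"
    using len by (cases ps) (auto simp: Suc_le_eq)
  have psY: "set ps \<subseteq> Y"
    using assms(3) dist xs ps_def by auto
  have "hd ps \<noteq> last ps"
    using dist ps \<open>qs \<noteq> []\<close> by auto
  moreover have "E w (hd ps)"
    using succ ps by simp
  moreover have "E w (last ps)"
    using sympD[OF assms(1) close] .
  moreover have "hd ps \<in> Y" and "last ps \<in> Y"
    using psY ps by auto
  moreover have "(induced_adj E Y)\<^sup>*\<^sup>* (hd ps) (last ps)"
  proof (rule successively_imp_rtranclp)
    have "successively E ps"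
      using succ ps by simp
    then show "successively (induced_adj E Y) ps"
      by (rule successively_mono) (use psY in \<open>auto simp: induced_adj_def\<close>)
  qed (use ps in simp)
  ultimately show ?thesis
    by (rule linked_neighboursI)
qed

lemma linked_neighbours_imp_on_cycle:
  assumes "symp E" and "linked_neighbours E Y w" and "w \<notin> Y"
  shows "\<exists>xs. is_cycle E xs \<and> set xs \<subseteq> Y \<union> {w} \<and> w \<in> set xs"
proof -
  obtain a b where ab: "a \<noteq> b" "E w a" "E w b" "a \<in> Y" "(induced_adj E Y)\<^sup>*\<^sup>* a b"
    using assms(2) unfolding linked_neighbours_def by blast
  then obtain ps where path: "rtrancl_path (induced_adj E Y) a ps b" and "distinct (a # ps)"
    by (metis rtranclp_eq_rtrancl_path rtrancl_path_distinct)
  have "set ps \<subseteq> Y"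
    using path by (rule rtrancl_path_induced_adj_subset)
  moreover obtain succ: "successively (induced_adj E Y) (a # ps)" and last: "last (a # ps) = b"
    using rtrancl_path_successively[OF path] by blast
  moreover have "ps \<noteq> []"
    using ab(1) last by auto
  moreover have "E b w"
    using sympD[OF assms(1) ab(3)] .
  ultimately have "is_cycle E (w # a # ps)"
    unfolding is_cycle_iff_successively using \<open>distinct (a # ps)\<close> ab assms(3)
    by (auto simp: Suc_le_eq induced_adj_def elim: successively_mono)
  then show ?thesis
    using \<open>set ps \<subseteq> Y\<close> ab(4) by (intro exI[of _ "w # a # ps"]) auto
qed

section \<open>Cycle convexity and cycle hulls\<close>

lemma cycle_convex_iff_linked_neighbours:
  assumes "symp E"
  shows "cycle_convex V E C \<longleftrightarrow> (\<forall>w \<in> V - C. \<not> linked_neighbours E C w)"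
  unfolding cycle_convex_def cycle_interval_def
  using on_cycle_imp_linked_neighbours[OF assms] linked_neighbours_imp_on_cycle[OF assms]
  by blast

lemma cycle_convexI:
  assumes "symp E" and "\<And>w. w \<in> V \<Longrightarrow> w \<notin> C \<Longrightarrow> linked_neighbours E C w \<Longrightarrow> False"
  shows "cycle_convex V E C"
  using assms by (auto simp: cycle_convex_iff_linked_neighbours)

lemma cycle_convexD:
  assumes "cycle_convex V E C" and "symp E" and "linked_neighbours E C w" and "w \<in> V"
  shows "w \<in> C"
  using assms by (auto simp: cycle_convex_iff_linked_neighbours)

lemma cycle_convex_whole: "cycle_convex V E V"
  unfolding cycle_convex_def cycle_interval_def by blast

lemma cycle_convex_empty: "cycle_convex V E {}"
proof -
  have "\<not> is_cycle E xs" if "set xs \<subseteq> {w}" for xs and w :: 'a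
  proof
    assume "is_cycle E xs"
    then have "3 \<le> card (set xs)"
      unfolding is_cycle_def by (simp add: distinct_card)
    moreover have "card (set xs) \<le> 1"
      using that by (metis card.empty card.insert card_mono empty_iff finite.intros One_nat_def)
    ultimately show False
      by simp
  qed
  then show ?thesis
    unfolding cycle_convex_def cycle_interval_def by auto
qed

lemma cycle_hull_least: "S \<subseteq> C \<Longrightarrow> C \<subseteq> V \<Longrightarrow> cycle_convex V E C \<Longrightarrow> cycle_hull V E S \<subseteq> C"
  unfolding cycle_hull_def by blast

lemma cycle_hull_superset: "S \<subseteq> cycle_hull V E S"
  unfolding cycle_hull_def by blast

lemma cycle_hull_subset: "S \<subseteq> V \<Longrightarrow> cycle_hull V E S \<subseteq> V"
  using cycle_hull_least[OF _ _ cycle_convex_whole] by blast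

lemma cycle_hull_empty: "cycle_hull V E {} = {}"
  using cycle_hull_least[OF _ _ cycle_convex_empty, of "{}" V E] by blast

lemma cycle_convex_cycle_hull:
  assumes "S \<subseteq> V"
  shows "cycle_convex V E (cycle_hull V E S)"
  unfolding cycle_convex_def cycle_interval_def
proof safe
  fix w xs
  assume w: "w \<in> V" "w \<notin> cycle_hull V E S" and xs: "is_cycle E xs" "w \<in> set xs"
    and in_hull: "set xs \<subseteq> cycle_hull V E S \<union> {w}"
  then obtain C where C: "S \<subseteq> C" "C \<subseteq> V" "cycle_convex V E C" "w \<notin> C"
    unfolding cycle_hull_def by blast
  then have "set xs \<subseteq> C \<union> {w}"
    using in_hull cycle_hull_least[OF C(1-3)] by blast
  then show "w \<in> cycle_hull V E S"
    using C(3,4) w(1) xs unfolding cycle_convex_def cycle_interval_def by blast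
qed

lemma cycle_hull_mono: "S \<subseteq> S' \<Longrightarrow> S' \<subseteq> V \<Longrightarrow> cycle_hull V E S \<subseteq> cycle_hull V E S'"
  using cycle_hull_least[OF _ cycle_hull_subset cycle_convex_cycle_hull] cycle_hull_superset
  by (metis order_trans)

lemma is_hull_setI:
  assumes "S \<subseteq> V" and "\<And>C. S \<subseteq> C \<Longrightarrow> C \<subseteq> V \<Longrightarrow> cycle_convex V E C \<Longrightarrow> V \<subseteq> C"
  shows "is_hull_set V E S"
  using assms cycle_hull_subset[OF assms(1)] cycle_hull_superset[of S V E]
    cycle_convex_cycle_hull[OF assms(1)]
  unfolding is_hull_set_def by blast

lemma hull_set_convex_superset_eq:
  assumes "is_hull_set V E S" and "S \<subseteq> C" and "C \<subseteq> V" and "cycle_convex V E C"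
  shows "C = V"
  using cycle_hull_least[OF assms(2-4)] assms(1,3) unfolding is_hull_set_def by blast

lemma hn_cc_le: "is_hull_set V E S \<Longrightarrow> hn_cc V E \<le> card S"
  unfolding hn_cc_def by (rule Least_le) blast

lemma min_hull_set_exists: "\<exists>S. min_hull_set V E S"
proof -
  have "is_hull_set V E V"
    unfolding is_hull_set_def using cycle_hull_subset[of V V E] cycle_hull_superset[of V V E] by blast
  then have "\<exists>n S. is_hull_set V E S \<and> card S = n"
    by blast
  then have "\<exists>S. is_hull_set V E S \<and> card S = hn_cc V E"
    unfolding hn_cc_def by (rule LeastI_ex)
  then show ?thesis
    unfolding min_hull_set_def .
qed

section \<open>Components and unions of convex sets\<close>

lemma linked_neighbours_mono:
  assumes "linked_neighbours E Y w" and "Y \<subseteq> Z"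
  shows "linked_neighbours E Z w"
proof -
  obtain a b where "a \<noteq> b" "E w a" "E w b" "a \<in> Y" "b \<in> Y" "(induced_adj E Y)\<^sup>*\<^sup>* a b"
    using assms(1) unfolding linked_neighbours_def by blast
  then show ?thesis
    using induced_walk_mono[of E Y a b Z] assms(2) unfolding linked_neighbours_def by blast
qed

lemma linked_neighbours_Un_no_edges:
  assumes "symp E" and "linked_neighbours E (A \<union> B) w" and "\<forall>x\<in>A. \<forall>y\<in>B. \<not> E x y"
  shows "linked_neighbours E A w \<or> linked_neighbours E B w"
proof -
  obtain a b where ab: "a \<noteq> b" "E w a" "E w b" "a \<in> A \<union> B"
    and walk: "(induced_adj E (A \<union> B))\<^sup>*\<^sup>* a b"
    using assms(2) unfolding linked_neighbours_def by blast
  show ?thesis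
  proof (cases "a \<in> A")
    case True
    then show ?thesis
      using induced_walk_stays[OF walk True assms(3)] ab unfolding linked_neighbours_def by blast
  next
    case False
    have "\<forall>x\<in>B. \<forall>y\<in>A. \<not> E x y"
      using assms(1,3) unfolding symp_def by blast
    moreover have "(induced_adj E (B \<union> A))\<^sup>*\<^sup>* a b"
      using walk by (simp add: Un_commute)
    ultimately show ?thesis
      using induced_walk_stays[of E B A a b] False ab unfolding linked_neighbours_def by blast
  qed
qed

lemma cycle_convex_Un_no_edges:
  assumes "symp E" and "cycle_convex V E C1" and "cycle_convex V E C2"
    and "\<forall>x\<in>C1. \<forall>y\<in>C2. \<not> E x y"
  shows "cycle_convex V E (C1 \<union> C2)"
proof (rule cycle_convexI[OF assms(1)])
  fix w
  assume "w \<in> V" "w \<notin> C1 \<union> C2" "linked_neighbours E (C1 \<union> C2) w"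
  then show False
    using linked_neighbours_Un_no_edges[OF assms(1) _ assms(4)]
      cycle_convexD[OF assms(2,1)] cycle_convexD[OF assms(3,1)] by blast
qed

lemma cycle_convex_closed_subset:
  assumes "symp E" and "cycle_convex V E C" and "K \<subseteq> C"
    and closed: "\<And>x y. x \<in> K \<Longrightarrow> y \<in> C \<Longrightarrow> E x y \<Longrightarrow> y \<in> K"
  shows "cycle_convex V E K"
proof (rule cycle_convexI[OF assms(1)])
  fix w
  assume w: "w \<in> V" "w \<notin> K" and linked: "linked_neighbours E K w"
  then obtain a where "E w a" "a \<in> K"
    unfolding linked_neighbours_def by blast
  moreover have "w \<in> C"
    using cycle_convexD[OF assms(2,1) linked_neighbours_mono[OF linked assms(3)] w(1)] .
  ultimately show False
    using closed[of a w] sympD[OF assms(1)] w(2) by blast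
qed

lemma induced_component_closed:
  "a \<in> induced_component E Y x \<Longrightarrow> b \<in> Y \<Longrightarrow> E a b \<Longrightarrow> b \<in> induced_component E Y x"
  using rtranclp.rtrancl_into_rtrancl[of "induced_adj E Y" x a b]
  unfolding induced_component_def induced_adj_def by blast

lemma induced_component_walk:
  assumes "x \<in> Y" and "y \<in> induced_component E Y x"
  shows "(induced_adj E (induced_component E Y x))\<^sup>*\<^sup>* x y"
proof -
  let ?K = "induced_component E Y x"
  have "?K \<union> (Y - ?K) = Y"
    unfolding induced_component_def by blast
  then have "(induced_adj E (?K \<union> (Y - ?K)))\<^sup>*\<^sup>* x y"
    using assms(2) unfolding induced_component_def by simp
  moreover have "x \<in> ?K"
    using assms(1) unfolding induced_component_def by simp
  moreover have "\<forall>a\<in>?K. \<forall>b\<in>Y - ?K. \<not> E a b"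
    using induced_component_closed[of _ E Y x] by blast
  ultimately show ?thesis
    using induced_walk_stays[of E ?K "Y - ?K" x y] by blast
qed

lemma cycle_convex_induced_component:
  assumes "symp E" and "cycle_convex V E C"
  shows "cycle_convex V E (induced_component E C x)"
    and "cycle_convex V E (C - induced_component E C x)"
proof -
  let ?K = "induced_component E C x"
  have KC: "?K \<subseteq> C"
    unfolding induced_component_def by blast
  have closed: "b \<in> ?K" if "a \<in> ?K" "b \<in> C" "E a b" for a b
    using induced_component_closed[OF that] .
  show "cycle_convex V E ?K"
    using cycle_convex_closed_subset[OF assms KC closed] .
  have "b \<in> C - ?K" if "a \<in> C - ?K" "b \<in> C" "E a b" for a b
    using that closed[of b a] sympD[OF assms(1)] by blast
  then show "cycle_convex V E (C - ?K)"
    using cycle_convex_closed_subset[OF assms, of "C - ?K"] by auto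
qed

lemma induced_component_subset_hull:
  fixes x :: 'a
  assumes "symp E" and "S \<subseteq> V"
  defines "K \<equiv> induced_component E (cycle_hull V E S) x"
  shows "K \<subseteq> cycle_hull V E (S \<inter> K)"
proof -
  let ?P = "cycle_hull V E S"
  let ?U1 = "cycle_hull V E (S \<inter> K)" and ?U2 = "cycle_hull V E (S - K)"
  have PV: "?P \<subseteq> V" and P: "cycle_convex V E ?P"
    using cycle_hull_subset[OF assms(2)] cycle_convex_cycle_hull[OF assms(2)] .
  have KP: "K \<subseteq> ?P"
    unfolding K_def induced_component_def by blast
  have U1: "?U1 \<subseteq> K"
    using cycle_hull_least[of "S \<inter> K" K] cycle_convex_induced_component(1)[OF assms(1) P] KP PV
    unfolding K_def by auto
  have U2: "?U2 \<subseteq> ?P - K"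
    using cycle_hull_least[of "S - K" "?P - K"] cycle_convex_induced_component(2)[OF assms(1) P]
      cycle_hull_superset[of S V E] PV
    unfolding K_def by blast
  have "cycle_convex V E (?U1 \<union> ?U2)"
  proof (rule cycle_convex_Un_no_edges[OF assms(1)])
    show "cycle_convex V E ?U1" and "cycle_convex V E ?U2"
      using cycle_convex_cycle_hull[of "S \<inter> K" V E] cycle_convex_cycle_hull[of "S - K" V E] assms(2)
      by auto
    show "\<forall>a\<in>?U1. \<forall>b\<in>?U2. \<not> E a b"
      using U1 U2 induced_component_closed[of _ E ?P x] unfolding K_def by blast
  qed
  moreover have "S \<subseteq> ?U1 \<union> ?U2"
    using cycle_hull_superset[of "S \<inter> K" V E] cycle_hull_superset[of "S - K" V E] by blast
  moreover have "?U1 \<union> ?U2 \<subseteq> V"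
    using cycle_hull_subset[of "S \<inter> K" V E] cycle_hull_subset[of "S - K" V E] assms(2) by blast
  ultimately have "?P \<subseteq> ?U1 \<union> ?U2"
    using cycle_hull_least[of S "?U1 \<union> ?U2" V E] by blast
  then show ?thesis
    using KP U2 by blast
qed

lemma cycle_convex_no_edges:
  assumes "symp E" and "\<forall>x\<in>C. \<forall>y\<in>C. \<not> E x y"
  shows "cycle_convex V E C"
proof (rule cycle_convexI[OF assms(1)])
  fix w
  assume "linked_neighbours E C w"
  then obtain a b where "a \<noteq> b" and "(induced_adj E C)\<^sup>*\<^sup>* a b"
    unfolding linked_neighbours_def by blast
  then obtain c where "induced_adj E C a c"
    by (metis converse_rtranclpE)
  then show False
    using assms(2) unfolding induced_adj_def by blast
qed

lemma hull_set_pair_adjacent: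
  assumes "is_graph V E" and "connected_graph V E" and "is_hull_set V E {u, v}" and "u \<noteq> v"
  shows "E u v"
proof (rule ccontr)
  assume "\<not> E u v"
  then have "\<forall>x\<in>{u, v}. \<forall>y\<in>{u, v}. \<not> E x y"
    using assms(1) unfolding is_graph_def by blast
  then have "cycle_convex V E {u, v}"
    using cycle_convex_no_edges[OF is_graph_symp[OF assms(1)]] by blast
  moreover have "{u, v} \<subseteq> V"
    using assms(3) unfolding is_hull_set_def by blast
  ultimately have V: "V = {u, v}"
    using hull_set_convex_superset_eq[OF assms(3) subset_refl] by blast
  then have "E\<^sup>*\<^sup>* u v"
    using assms(2) unfolding connected_graph_def by blast
  then obtain y where "E u y"
    using assms(4) by (metis converse_rtranclpE)
  then show False
    using V \<open>\<not> E u v\<close> assms(1) unfolding is_graph_def by blast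
qed

lemma split_of_overlapping_hulls:
  assumes "S \<subseteq> V" and "A \<subseteq> S" and "B \<subseteq> S" and "A \<inter> B = {}"
    and overlap: "cycle_hull V E A \<inter> cycle_hull V E B \<noteq> {}"
  shows "\<exists>S1 S2. S1 \<union> S2 = S \<and> S1 \<inter> S2 = {} \<and> S1 \<noteq> {} \<and> S2 \<noteq> {}
           \<and> cycle_hull V E S1 \<inter> cycle_hull V E S2 \<noteq> {}"
proof (rule exI[of _ A], rule exI[of _ "S - A"], intro conjI)
  show "A \<union> (S - A) = S" and "A \<inter> (S - A) = {}"
    using assms(2) by blast+
  have "B \<subseteq> S - A"
    using assms(3,4) by blast
  then have "cycle_hull V E B \<subseteq> cycle_hull V E (S - A)"
    using cycle_hull_mono[of B "S - A" V E] assms(1) by blast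
  then show "cycle_hull V E A \<inter> cycle_hull V E (S - A) \<noteq> {}"
    using overlap by blast
  show "A \<noteq> {}"
    using overlap cycle_hull_empty[of V E] by auto
  have "B \<noteq> {}"
    using overlap cycle_hull_empty[of V E] by auto
  then show "S - A \<noteq> {}"
    using \<open>B \<subseteq> S - A\<close> by blast
qed

section \<open>Convex sets of the Cartesian product\<close>

lemma symp_box_edges: "symp EG \<Longrightarrow> symp EH \<Longrightarrow> symp (box_edges EG EH)"
  unfolding symp_def box_edges_def by auto

lemma cycle_convex_vimage:
  assumes "symp E" and "symp E'" and "cycle_convex V' E' C"
    and "inj_on f V" and "f ` V \<subseteq> V'" and edges: "\<And>x y. E x y \<Longrightarrow> E' (f x) (f y)"
  shows "cycle_convex V E {x \<in> V. f x \<in> C}"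
proof (rule cycle_convexI[OF assms(1)])
  let ?D = "{x \<in> V. f x \<in> C}"
  fix w
  assume w: "w \<in> V" "w \<notin> ?D" and "linked_neighbours E ?D w"
  then obtain a b where ab: "a \<noteq> b" "E w a" "E w b" "a \<in> ?D" "b \<in> ?D"
    and walk: "(induced_adj E ?D)\<^sup>*\<^sup>* a b"
    unfolding linked_neighbours_def by blast
  have step: "induced_adj E' C (f x) (f y)" if "induced_adj E ?D x y" for x y
    using that edges unfolding induced_adj_def by blast
  have "(induced_adj E' C)\<^sup>*\<^sup>* (f a) (f b)"
    using rtranclp_map[of "induced_adj E ?D" "induced_adj E' C" f, OF _ walk] step by blast
  moreover have "f a \<noteq> f b"
    using assms(4) ab(1,4,5) unfolding inj_on_def by blast
  ultimately have "linked_neighbours E' C (f w)"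
    unfolding linked_neighbours_def using ab(4,5) edges[OF ab(2)] edges[OF ab(3)] by blast
  then have "f w \<in> C"
    using cycle_convexD[OF assms(3,2)] w(1) assms(5) by blast
  then show False
    using w by blast
qed

lemma box_layer_convex:
  assumes "is_graph VG EG" and "is_graph VH EH"
    and "cycle_convex (VG \<times> VH) (box_edges EG EH) C" and "h \<in> VH"
  shows "cycle_convex VG EG {g \<in> VG. (g, h) \<in> C}"
  using assms
  by (intro cycle_convex_vimage[of EG "box_edges EG EH" "VG \<times> VH" C "\<lambda>g. (g, h)"])
    (auto simp: is_graph_symp symp_box_edges inj_on_def box_edges_def)

lemma box_fibre_convex:
  assumes "is_graph VG EG" and "is_graph VH EH"
    and "cycle_convex (VG \<times> VH) (box_edges EG EH) C" and "g \<in> VG"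
  shows "cycle_convex VH EH {h \<in> VH. (g, h) \<in> C}"
  using assms
  by (intro cycle_convex_vimage[of EH "box_edges EG EH" "VG \<times> VH" C "\<lambda>h. (g, h)"])
    (auto simp: is_graph_symp symp_box_edges inj_on_def box_edges_def)

lemma box_convex_layer_hull:
  assumes "is_graph VG EG" and "is_graph VH EH"
    and "cycle_convex (VG \<times> VH) (box_edges EG EH) C" and "h \<in> VH"
    and "S \<subseteq> VG" and "S \<times> {h} \<subseteq> C"
  shows "cycle_hull VG EG S \<times> {h} \<subseteq> C"
proof -
  have "cycle_hull VG EG S \<subseteq> {g \<in> VG. (g, h) \<in> C}"
    using cycle_hull_least[OF _ _ box_layer_convex[OF assms(1-4)], of S] assms(5,6) by blast
  then show ?thesis
    by blast
qed

lemma box_convex_square: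
  assumes "is_graph VG EG" and "is_graph VH EH"
    and "cycle_convex (VG \<times> VH) (box_edges EG EH) C"
    and "(a, b) \<in> C" and "(a', b) \<in> C" and "(a, b') \<in> C" and "EG a a'" and "EH b b'"
  shows "(a', b') \<in> C"
proof (rule cycle_convexD[OF assms(3) symp_box_edges[OF assms(1,2)[THEN is_graph_symp]]])
  have "EG a' a" "EH b' b" "a \<noteq> a'" "a' \<in> VG" "b' \<in> VH"
    using assms(1,2,7,8) unfolding is_graph_def by blast+
  then show "(a', b') \<in> VG \<times> VH"
    by blast
  have "induced_adj (box_edges EG EH) C (a', b) (a, b)"
    and "induced_adj (box_edges EG EH) C (a, b) (a, b')"
    using assms(4-8) \<open>EG a' a\<close> unfolding induced_adj_def box_edges_def by simp_all
  then have "(induced_adj (box_edges EG EH) C)\<^sup>*\<^sup>* (a', b) (a, b')"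
    by (rule converse_rtranclp_into_rtranclp[OF _ r_into_rtranclp])
  then show "linked_neighbours (box_edges EG EH) C (a', b')"
    unfolding linked_neighbours_def using assms(5,6) \<open>EG a' a\<close> \<open>EH b' b\<close> \<open>a \<noteq> a'\<close>
    by (intro exI[of _ "(a', b)"] exI[of _ "(a, b')"]) (auto simp: box_edges_def)
qed

lemma box_convex_row_transfer:
  assumes "is_graph VG EG" and "is_graph VH EH"
    and "cycle_convex (VG \<times> VH) (box_edges EG EH) C" and "EH v u"
    and "(induced_adj EG Y)\<^sup>*\<^sup>* x g" and "Y \<times> {v} \<subseteq> C" and "(x, u) \<in> C"
  shows "(g, u) \<in> C"
  using assms(5)
proof induction
  case (step y z)
  then show ?case
    using box_convex_square[OF assms(1-3), of y v z u] assms(4,6) unfolding induced_adj_def by blast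
qed (use assms(7) in simp)

lemma box_convex_cross:
  assumes "is_graph VG EG" and "is_graph VH EH"
    and "connected_graph VG EG" and "connected_graph VH EH"
    and "cycle_convex (VG \<times> VH) (box_edges EG EH) C" and "u \<in> VH" and "g \<in> VG"
    and "VG \<times> {u} \<subseteq> C" and "{g} \<times> VH \<subseteq> C"
  shows "VG \<times> VH \<subseteq> C"
proof clarify
  fix g' h
  assume "g' \<in> VG" "h \<in> VH"
  have "EH\<^sup>*\<^sup>* u h"
    using assms(4,6) \<open>h \<in> VH\<close> unfolding connected_graph_def by blast
  then show "(g', h) \<in> C"
    using \<open>g' \<in> VG\<close>
  proof (induction arbitrary: g')
    case base
    then show ?case
      using assms(8) by blast
  next
    case (step h1 h2)
    have "(induced_adj EG VG)\<^sup>*\<^sup>* g g'"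
      using assms(3,7) step.prems induced_adj_graph[OF assms(1)]
      unfolding connected_graph_def by simp
    moreover have "VG \<times> {h1} \<subseteq> C" and "(g, h2) \<in> C"
      using step.IH assms(2,9) step.hyps(2) unfolding is_graph_def by blast+
    ultimately show ?case
      using box_convex_row_transfer[OF assms(1,2,5) step.hyps(2)] by blast
  qed
qed

lemma box_convex_full_of_row:
  assumes "is_graph VG EG" and "is_graph VH EH"
    and "connected_graph VG EG" and "connected_graph VH EH" and "is_hull_set VH EH {u, v}"
    and "cycle_convex (VG \<times> VH) (box_edges EG EH) C" and "x \<in> VG"
    and "VG \<times> {u} \<subseteq> C" and "(x, v) \<in> C"
  shows "VG \<times> VH \<subseteq> C"
proof (rule box_convex_cross[OF assms(1-4,6) _ assms(7,8)])
  show u: "u \<in> VH"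
    using assms(5) unfolding is_hull_set_def by blast
  have "{u, v} \<subseteq> {h \<in> VH. (x, h) \<in> C}"
    using assms(5,7-9) unfolding is_hull_set_def by blast
  then have "{h \<in> VH. (x, h) \<in> C} = VH"
    using hull_set_convex_superset_eq[OF assms(5) _ _ box_fibre_convex[OF assms(1,2,6,7)]] by blast
  then show "{x} \<times> VH \<subseteq> C"
    by blast
qed

lemma cycle_convex_Times:
  assumes "symp EG" and "symp EH" and "cycle_convex VG EG C"
  shows "cycle_convex (VG \<times> VH) (box_edges EG EH) (C \<times> VH)"
proof (rule cycle_convexI[OF symp_box_edges[OF assms(1,2)]])
  fix w
  assume w: "w \<in> VG \<times> VH" "w \<notin> C \<times> VH" and "linked_neighbours (box_edges EG EH) (C \<times> VH) w"
  then obtain a b where ab: "a \<noteq> b" "box_edges EG EH w a" "box_edges EG EH w b"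
    "a \<in> C \<times> VH" "b \<in> C \<times> VH" and walk: "(induced_adj (box_edges EG EH) (C \<times> VH))\<^sup>*\<^sup>* a b"
    unfolding linked_neighbours_def by blast
  have "fst w \<notin> C"
    using w by auto
  then have edges: "EG (fst w) (fst a) \<and> snd a = snd w" "EG (fst w) (fst b) \<and> snd b = snd w"
    using ab(2-5) unfolding box_edges_def by auto
  then have "fst a \<noteq> fst b"
    using ab(1) by (metis prod.expand)
  moreover have "(induced_adj EG C)\<^sup>*\<^sup>* (fst a) (fst b)"
  proof (rule rtranclp_map[of "induced_adj (box_edges EG EH) (C \<times> VH)" _ fst, OF _ walk])
    fix p q
    assume "induced_adj (box_edges EG EH) (C \<times> VH) p q"
    then have "fst p = fst q \<or> induced_adj EG C (fst p) (fst q)"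
      unfolding induced_adj_def box_edges_def by auto
    then show "(induced_adj EG C)\<^sup>*\<^sup>* (fst p) (fst q)"
      by auto
  qed
  ultimately have "linked_neighbours EG C (fst w)"
    using linked_neighboursI[of "fst a" "fst b"] ab(4,5) edges by auto
  then show False
    using cycle_convexD[OF assms(3,1)] w \<open>fst w \<notin> C\<close> by auto
qed

lemma is_hull_set_fst_image:
  assumes "is_graph VG EG" and "is_graph VH EH" and "VH \<noteq> {}"
    and "is_hull_set (VG \<times> VH) (box_edges EG EH) T"
  shows "is_hull_set VG EG (fst ` T)"
proof -
  let ?C = "cycle_hull VG EG (fst ` T)"
  have TV: "T \<subseteq> VG \<times> VH"
    using assms(4) unfolding is_hull_set_def by blast
  then have SV: "fst ` T \<subseteq> VG"
    by auto
  have "cycle_convex (VG \<times> VH) (box_edges EG EH) (?C \<times> VH)"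
    using cycle_convex_Times[OF assms(1,2)[THEN is_graph_symp] cycle_convex_cycle_hull[OF SV]] .
  moreover have "T \<subseteq> ?C \<times> VH"
    using TV cycle_hull_superset[of "fst ` T" VG EG] by force
  moreover have "?C \<times> VH \<subseteq> VG \<times> VH"
    using cycle_hull_subset[OF SV] by blast
  ultimately have "?C \<times> VH = VG \<times> VH"
    using hull_set_convex_superset_eq[OF assms(4)] by blast
  then have "?C = VG"
    using assms(3) Times_eq_cancel2 by blast
  then show ?thesis
    using SV unfolding is_hull_set_def by blast
qed

lemma box_layered_walk:
  assumes "disjoint_family_on A VH"
    and "(induced_adj (box_edges EG EH) {p \<in> VG \<times> VH. fst p \<in> A (snd p)})\<^sup>*\<^sup>* p q"
  shows "snd q = snd p \<and> (induced_adj EG (A (snd p)))\<^sup>*\<^sup>* (fst p) (fst q)"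
  using assms(2)
proof induction
  case (step y z)
  have yz: "snd y \<in> VH" "snd z \<in> VH" "fst y \<in> A (snd y)" "fst z \<in> A (snd z)"
    and edge: "box_edges EG EH y z"
    using step.hyps(2) unfolding induced_adj_def by auto
  show ?case
  proof (cases "snd y = snd z")
    case True
    then have "y = z \<or> EG (fst y) (fst z)"
      using edge unfolding box_edges_def by (auto simp: prod_eq_iff)
    then have "(induced_adj EG (A (snd y)))\<^sup>*\<^sup>* (fst y) (fst z)"
      using yz(3,4) True unfolding induced_adj_def by auto
    then show ?thesis
      using step.IH True by (metis rtranclp_trans)
  next
    case False
    then have "fst y = fst z"
      using edge unfolding box_edges_def by auto
    then have "A (snd y) \<inter> A (snd z) \<noteq> {}"
      using yz(3,4) by auto
    then show ?thesis
      using assms(1) yz(1,2) False unfolding disjoint_family_on_def by blast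
  qed
qed simp

lemma cycle_convex_box_layered:
  assumes "symp EG" and "symp EH" and convex: "\<And>h. h \<in> VH \<Longrightarrow> cycle_convex VG EG (A h)"
    and "disjoint_family_on A VH"
  shows "cycle_convex (VG \<times> VH) (box_edges EG EH) {p \<in> VG \<times> VH. fst p \<in> A (snd p)}"
proof (rule cycle_convexI[OF symp_box_edges[OF assms(1,2)]])
  let ?L = "{p \<in> VG \<times> VH. fst p \<in> A (snd p)}"
  fix w
  assume w: "w \<in> VG \<times> VH" "w \<notin> ?L" and "linked_neighbours (box_edges EG EH) ?L w"
  then obtain a b where ab: "a \<noteq> b" "box_edges EG EH w a" "box_edges EG EH w b" "a \<in> ?L" "b \<in> ?L"
    and walk: "(induced_adj (box_edges EG EH) ?L)\<^sup>*\<^sup>* a b"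
    unfolding linked_neighbours_def by blast
  have sb: "snd b = snd a" and fwalk: "(induced_adj EG (A (snd a)))\<^sup>*\<^sup>* (fst a) (fst b)"
    using box_layered_walk[OF assms(4) walk] by auto
  have "fst a \<noteq> fst b"
    using ab(1) sb by (auto simp: prod_eq_iff)
  show False
  proof (cases "snd a = snd w")
    case True
    have "a \<noteq> w" "b \<noteq> w"
      using ab(4,5) w(2) by auto
    then have "EG (fst w) (fst a)" "EG (fst w) (fst b)"
      using ab(2,3) True sb unfolding box_edges_def by (auto simp: prod_eq_iff)
    then have "linked_neighbours EG (A (snd w)) (fst w)"
      using linked_neighboursI[OF \<open>fst a \<noteq> fst b\<close>] ab(4,5) fwalk True sb by auto
    then have "fst w \<in> A (snd w)"
      using cycle_convexD[OF convex assms(1)] w(1) by auto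
    then show False
      using w by auto
  next
    case False
    then have "fst a = fst w" "fst b = fst w"
      using ab(2,3) sb unfolding box_edges_def by auto
    then show False
      using \<open>fst a \<noteq> fst b\<close> by simp
  qed
qed

lemma box_hull_set_fibre_hulls_not_disjoint:
  assumes "symp EG" and "symp EH" and "g \<in> VG" and "h1 \<in> VH" and "h2 \<in> VH" and "h1 \<noteq> h2"
    and "is_hull_set (VG \<times> VH) (box_edges EG EH) T"
  shows "\<not> disjoint_family_on (\<lambda>h. cycle_hull VG EG {g. (g, h) \<in> T}) VH"
proof
  let ?A = "\<lambda>h. cycle_hull VG EG {g. (g, h) \<in> T}"
  let ?L = "{p \<in> VG \<times> VH. fst p \<in> ?A (snd p)}"
  assume disj: "disjoint_family_on ?A VH"
  have TV: "T \<subseteq> VG \<times> VH"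
    using assms(7) unfolding is_hull_set_def by blast
  have "cycle_convex VG EG (?A h)" for h
    using cycle_convex_cycle_hull[of "{g. (g, h) \<in> T}" VG EG] TV by blast
  then have "cycle_convex (VG \<times> VH) (box_edges EG EH) ?L"
    by (rule cycle_convex_box_layered[OF assms(1,2) _ disj])
  moreover have "T \<subseteq> ?L"
  proof
    fix p
    assume "p \<in> T"
    then have "fst p \<in> ?A (snd p)"
      using cycle_hull_superset[of "{g. (g, snd p) \<in> T}" VG EG] by auto
    then show "p \<in> ?L"
      using TV \<open>p \<in> T\<close> by blast
  qed
  moreover have "?L \<subseteq> VG \<times> VH"
    by blast
  ultimately have "?L = VG \<times> VH"
    using hull_set_convex_superset_eq[OF assms(7), of ?L] by blast
  then have "(g, h1) \<in> ?L" and "(g, h2) \<in> ?L"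
    using assms(3-5) by simp_all
  then have "g \<in> ?A h1 \<inter> ?A h2"
    by simp
  then show False
    using disj assms(4-6) unfolding disjoint_family_on_def by blast
qed

lemma split_of_injective_box_hull_set:
  assumes "symp EG" and "symp EH" and "g \<in> VG" and "h1 \<in> VH" and "h2 \<in> VH" and "h1 \<noteq> h2"
    and T: "is_hull_set (VG \<times> VH) (box_edges EG EH) T" and "inj_on fst T"
  shows "\<exists>S1 S2. S1 \<union> S2 = fst ` T \<and> S1 \<inter> S2 = {} \<and> S1 \<noteq> {} \<and> S2 \<noteq> {}
           \<and> cycle_hull VG EG S1 \<inter> cycle_hull VG EG S2 \<noteq> {}"
proof -
  let ?F = "\<lambda>h. {g. (g, h) \<in> T}"
  obtain k1 k2 where "k1 \<noteq> k2" and overlap: "cycle_hull VG EG (?F k1) \<inter> cycle_hull VG EG (?F k2) \<noteq> {}"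
    using box_hull_set_fibre_hulls_not_disjoint[OF assms(1-6) T] unfolding disjoint_family_on_def by blast
  have "(g, k1) \<notin> T \<or> (g, k2) \<notin> T" for g
    using inj_onD[OF assms(8), of "(g, k1)" "(g, k2)"] \<open>k1 \<noteq> k2\<close> by auto
  then have disjoint: "?F k1 \<inter> ?F k2 = {}"
    by blast
  have fibre: "?F k \<subseteq> fst ` T" for k
    by force
  have "fst ` T \<subseteq> VG"
    using T unfolding is_hull_set_def by auto
  from split_of_overlapping_hulls[OF this fibre fibre disjoint overlap] show ?thesis .
qed

section \<open>Hull sets and hull numbers of the Cartesian product\<close>

lemma box_hull_set_of_pair:
  assumes "is_graph VG EG" and "is_graph VH EH"
    and "connected_graph VG EG" and "connected_graph VH EH"
    and "is_hull_set VH EH {u, v}" and "is_hull_set VG EG S" and "g \<in> S"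
  shows "is_hull_set (VG \<times> VH) (box_edges EG EH) (S \<times> {u} \<union> {(g, v)})"
proof (rule is_hull_setI)
  have SV: "S \<subseteq> VG" and uv: "u \<in> VH" "v \<in> VH"
    using assms(5,6) unfolding is_hull_set_def by auto
  then show "S \<times> {u} \<union> {(g, v)} \<subseteq> VG \<times> VH"
    using assms(7) by blast
  fix C
  assume TC: "S \<times> {u} \<union> {(g, v)} \<subseteq> C"
    and convex: "cycle_convex (VG \<times> VH) (box_edges EG EH) C"
  then have "VG \<times> {u} \<subseteq> C"
    using box_convex_layer_hull[OF assms(1,2) convex uv(1) SV] assms(6)
    unfolding is_hull_set_def by blast
  then show "VG \<times> VH \<subseteq> C"
    using box_convex_full_of_row[OF assms(1-5) convex, of g] TC SV assms(7) by blast
qed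

lemma box_hull_set_of_split:
  assumes "is_graph VG EG" and "is_graph VH EH"
    and "connected_graph VG EG" and "connected_graph VH EH"
    and "is_hull_set VH EH {u, v}" and "EH u v" and S: "is_hull_set VG EG S"
    and "S1 \<union> S2 = S" and "S1 \<inter> S2 = {}"
    and x1: "x \<in> cycle_hull VG EG S1" and x2: "x \<in> cycle_hull VG EG S2"
  defines "K \<equiv> induced_component EG (cycle_hull VG EG S2) x"
  shows "is_hull_set (VG \<times> VH) (box_edges EG EH) ((S - S2 \<inter> K) \<times> {u} \<union> (S2 \<inter> K) \<times> {v})"
proof (rule is_hull_setI)
  have SV: "S \<subseteq> VG" and uv: "u \<in> VH" "v \<in> VH"
    using assms(5) S unfolding is_hull_set_def by auto
  then show "(S - S2 \<inter> K) \<times> {u} \<union> (S2 \<inter> K) \<times> {v} \<subseteq> VG \<times> VH"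
    using assms(8) by auto
  fix C
  assume TC: "(S - S2 \<inter> K) \<times> {u} \<union> (S2 \<inter> K) \<times> {v} \<subseteq> C"
    and convex: "cycle_convex (VG \<times> VH) (box_edges EG EH) C"
  note layer_hull = box_convex_layer_hull[OF assms(1,2) convex]
  have "S1 \<times> {u} \<subseteq> C"
    using TC assms(8,9) by blast
  then have xu: "(x, u) \<in> C"
    using layer_hull[OF uv(1)] x1 SV assms(8) by blast
  have "(S2 \<inter> K) \<times> {v} \<subseteq> C"
    using TC by blast
  moreover have "K \<subseteq> cycle_hull VG EG (S2 \<inter> K)"
    using induced_component_subset_hull[OF is_graph_symp[OF assms(1)], of S2 VG x] SV assms(8)
    unfolding K_def by blast
  ultimately have Kv: "K \<times> {v} \<subseteq> C"
    using layer_hull[OF uv(2), of "S2 \<inter> K"] SV assms(8) by blast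
  have "EH v u"
    using assms(2,6) unfolding is_graph_def by blast
  have "(g, u) \<in> C" if "g \<in> K" for g
    using box_convex_row_transfer[OF assms(1,2) convex \<open>EH v u\<close> _ Kv xu]
      induced_component_walk[OF x2 that[unfolded K_def]] unfolding K_def by blast
  then have "S \<times> {u} \<subseteq> C"
    using TC by blast
  then have "VG \<times> {u} \<subseteq> C"
    using layer_hull[OF uv(1) SV] S unfolding is_hull_set_def by blast
  moreover have "(x, v) \<in> C" and "x \<in> VG"
    using Kv x2 SV cycle_hull_subset[of S2 VG EG] assms(8) unfolding K_def induced_component_def
    by auto
  ultimately show "VG \<times> VH \<subseteq> C"
    using box_convex_full_of_row[OF assms(1-5) convex] by blast
qed

lemma nontrivial_graphE:
  assumes "nontrivial_graph V"
  obtains a b where "a \<in> V" and "b \<in> V" and "a \<noteq> b"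
proof -
  have "finite V" and "\<not> card V \<le> Suc 0"
    using assms unfolding nontrivial_graph_def by (auto intro: card_ge_0_finite)
  then show ?thesis
    using that card_le_Suc0_iff_eq by blast
qed

lemma card_box_layers_le:
  assumes "finite S" and "B \<subseteq> S"
  shows "card ((S - B) \<times> {u} \<union> B \<times> {v}) \<le> card S"
proof -
  have "card ((S - B) \<times> {u} \<union> B \<times> {v}) \<le> card (S - B) + card B"
    using card_Un_le[of "(S - B) \<times> {u}" "B \<times> {v}"] by (simp add: card_cartesian_product)
  also have "\<dots> = card S"
    using assms by (metis card_Diff_subset card_mono finite_subset le_add_diff_inverse2)
  finally show ?thesis .
qed

lemma hn_cc_le_hn_cc_box:
  assumes "is_graph VG EG" and "is_graph VH EH" and "VH \<noteq> {}"
  shows "hn_cc VG EG \<le> hn_cc (VG \<times> VH) (box_edges EG EH)"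
proof -
  obtain T where T: "is_hull_set (VG \<times> VH) (box_edges EG EH) T"
    and card_T: "card T = hn_cc (VG \<times> VH) (box_edges EG EH)"
    using min_hull_set_exists unfolding min_hull_set_def by blast
  have "finite T"
    using T assms(1,2) finite_subset unfolding is_hull_set_def is_graph_def by blast
  have "hn_cc VG EG \<le> card (fst ` T)"
    using hn_cc_le is_hull_set_fst_image[OF assms T] .
  also have "\<dots> \<le> card T"
    using card_image_le[OF \<open>finite T\<close>] .
  finally show ?thesis
    using card_T by simp
qed

lemma hn_cc_box_le_Suc:
  assumes "is_graph VG EG" and "is_graph VH EH"
    and "connected_graph VG EG" and "connected_graph VH EH"
    and "is_hull_set VH EH {u, v}" and "VG \<noteq> {}"
  shows "hn_cc (VG \<times> VH) (box_edges EG EH) \<le> hn_cc VG EG + 1"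
proof -
  obtain S where S: "is_hull_set VG EG S" and card_S: "card S = hn_cc VG EG"
    using min_hull_set_exists unfolding min_hull_set_def by blast
  have "S \<noteq> {}"
    using S assms(6) cycle_hull_empty[of VG EG] unfolding is_hull_set_def by auto
  then obtain g where "g \<in> S"
    by blast
  have "finite S"
    using S assms(1) finite_subset unfolding is_hull_set_def is_graph_def by blast
  then have "card (S \<times> {u} \<union> {(g, v)}) \<le> card S + 1"
    using card_Un_le[of "S \<times> {u}" "{(g, v)}"] by (simp add: card_cartesian_product)
  then show ?thesis
    using hn_cc_le[OF box_hull_set_of_pair[OF assms(1-5) S \<open>g \<in> S\<close>]] card_S by linarith
qed

lemma hn_cc_box_le_of_split:
  assumes "is_graph VG EG" and "is_graph VH EH"
    and "connected_graph VG EG" and "connected_graph VH EH"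
    and "is_hull_set VH EH {u, v}" and "EH u v" and "min_hull_set VG EG S"
    and "S1 \<union> S2 = S" and "S1 \<inter> S2 = {}"
    and "cycle_hull VG EG S1 \<inter> cycle_hull VG EG S2 \<noteq> {}"
  shows "hn_cc (VG \<times> VH) (box_edges EG EH) \<le> hn_cc VG EG"
proof -
  obtain x where x: "x \<in> cycle_hull VG EG S1" "x \<in> cycle_hull VG EG S2"
    using assms(10) by blast
  have S: "is_hull_set VG EG S" and card_S: "card S = hn_cc VG EG"
    using assms(7) unfolding min_hull_set_def by blast+
  define B where "B = S2 \<inter> induced_component EG (cycle_hull VG EG S2) x"
  have "finite S"
    using S assms(1) finite_subset unfolding is_hull_set_def is_graph_def by blast
  moreover have "B \<subseteq> S"
    using assms(8) unfolding B_def by blast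
  moreover have "is_hull_set (VG \<times> VH) (box_edges EG EH) ((S - B) \<times> {u} \<union> B \<times> {v})"
    unfolding B_def by (rule box_hull_set_of_split[OF assms(1-6) S assms(8,9) x])
  ultimately show ?thesis
    using hn_cc_le card_box_layers_le card_S by (metis order_trans)
qed

lemma split_of_hn_cc_box_eq:
  assumes "is_graph VG EG" and "is_graph VH EH"
    and "g \<in> VG" and "h1 \<in> VH" and "h2 \<in> VH" and "h1 \<noteq> h2"
    and "hn_cc (VG \<times> VH) (box_edges EG EH) = hn_cc VG EG"
  shows "\<exists>S S1 S2. min_hull_set VG EG S \<and> S1 \<union> S2 = S \<and> S1 \<inter> S2 = {}
           \<and> S1 \<noteq> {} \<and> S2 \<noteq> {} \<and> cycle_hull VG EG S1 \<inter> cycle_hull VG EG S2 \<noteq> {}"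
proof -
  obtain T where T: "is_hull_set (VG \<times> VH) (box_edges EG EH) T"
    and card_T: "card T = hn_cc VG EG"
    using min_hull_set_exists assms(7) unfolding min_hull_set_def by metis
  have "finite T"
    using T assms(1,2) finite_subset unfolding is_hull_set_def is_graph_def by blast
  have S: "is_hull_set VG EG (fst ` T)"
    using is_hull_set_fst_image[OF assms(1,2) _ T] assms(4) by blast
  then have "card T \<le> card (fst ` T)"
    using hn_cc_le card_T by metis
  then have "card (fst ` T) = card T"
    using card_image_le[OF \<open>finite T\<close>, of fst] by linarith
  then have "inj_on fst T" and "min_hull_set VG EG (fst ` T)"
    using eq_card_imp_inj_on[OF \<open>finite T\<close>] S card_T unfolding min_hull_set_def by auto
  then show ?thesis
    using split_of_injective_box_hull_set[OF assms(1,2)[THEN is_graph_symp] assms(3-6) T] by blast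
qed

theorem mainTheorem8:
  fixes VG :: "'a set" and EG :: "'a \<Rightarrow> 'a \<Rightarrow> bool"
    and VH :: "'b set" and EH :: "'b \<Rightarrow> 'b \<Rightarrow> bool"
  assumes "is_graph VG EG" and "connected_graph VG EG" and "nontrivial_graph VG"
    and "is_graph VH EH" and "connected_graph VH EH" and "nontrivial_graph VH"
    and "hn_cc VH EH = 2"
  shows "hn_cc VG EG \<le> hn_cc (VG \<times> VH) (box_edges EG EH)
         \<and> hn_cc (VG \<times> VH) (box_edges EG EH) \<le> hn_cc VG EG + 1
         \<and> (hn_cc (VG \<times> VH) (box_edges EG EH) = hn_cc VG EG \<longleftrightarrow>
             (\<exists>S S1 S2. min_hull_set VG EG S \<and> S1 \<union> S2 = S \<and> S1 \<inter> S2 = {}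
                 \<and> S1 \<noteq> {} \<and> S2 \<noteq> {}
                 \<and> cycle_hull VG EG S1 \<inter> cycle_hull VG EG S2 \<noteq> {}))"
proof -
  obtain u v where uv: "is_hull_set VH EH {u, v}" and "u \<noteq> v"
    using min_hull_set_exists[of VH EH] assms(7) unfolding min_hull_set_def by (metis card_2_iff)
  then have "EH u v"
    using hull_set_pair_adjacent[OF assms(4,5)] by blast
  obtain g where g: "g \<in> VG"
    using nontrivial_graphE[OF assms(3)] by blast
  obtain h1 h2 where h: "h1 \<in> VH" "h2 \<in> VH" "h1 \<noteq> h2"
    using nontrivial_graphE[OF assms(6)] by blast
  have "hn_cc VG EG \<le> hn_cc (VG \<times> VH) (box_edges EG EH)"
    using hn_cc_le_hn_cc_box[OF assms(1,4)] h(1) by blast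
  moreover have "hn_cc (VG \<times> VH) (box_edges EG EH) \<le> hn_cc VG EG + 1"
    using hn_cc_box_le_Suc[OF assms(1,4,2,5) uv] g by blast
  moreover note split_of_hn_cc_box_eq[OF assms(1,4) g h]
  moreover have "hn_cc (VG \<times> VH) (box_edges EG EH) \<le> hn_cc VG EG"
    if "min_hull_set VG EG S" "S1 \<union> S2 = S" "S1 \<inter> S2 = {}"
      "cycle_hull VG EG S1 \<inter> cycle_hull VG EG S2 \<noteq> {}" for S S1 S2
    using hn_cc_box_le_of_split[OF assms(1,4,2,5) uv \<open>EH u v\<close> that] .
  ultimately show ?thesis
    using le_antisym by blast
qed

end
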